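(* For $\lambda>0$ let $\zeta_\lambda(z)=\lambda\frac{z}{z+1}e^{-z}$, and consider its restriction $\zeta_\lambda(x)$ to real $x\neq -1$. Let $\lambda^{*}=(\sqrt{2}+1)e^{\sqrt{2}}$. Then: (i) If $0<\lambda<1$, then $\zeta_\lambda$ has a unique nonzero real fixed point $r_\lambda$, it lies in $(-1,0)$ and is repelling, and the fixed point $0$ is attracting. (ii) If $\lambda=1$, then the fixed point $0$ is rationally indifferent. (iii) If $1<\lambda<\lambda^{*}$, then $\zeta_\lambda$ has a unique nonzero real fixed point $a_\lambda$, it lies in $(0,\sqrt{2})$ and is attracting, and the fixed point $0$ is repelling. (iv) If $\lambda=\lambda^{*}$, then $\sqrt{2}$ is a rationally indifferent fixed point and the fixed point $0$ is repelling. (v) If $\lambda>\lambda^{*}$, then the fixed point $0$ is repelling.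
   Context: A fixed point $x_f$ of $\zeta_\lambda$ is called attracting if $|\zeta_\lambda'(x_f)|<1$, repelling if $|\zeta_\lambda'(x_f)|>1$, and rationally indifferent if $\zeta_\lambda'(x_f)$ is a root of unity (here, $|\zeta_\lambda'(x_f)|=1$ with real multiplier). *)

theory Defs
  imports "HOL-Analysis.Analysis"
begin

definition zeta :: "real \<Rightarrow> real \<Rightarrow> real" where
  "zeta lam x = lam * (x / (x + 1)) * exp (- x)"

definition is_fixed_point :: "(real \<Rightarrow> real) \<Rightarrow> real \<Rightarrow> bool" where
  "is_fixed_point f x \<longleftrightarrow> f x = x"

definition attracting :: "(real \<Rightarrow> real) \<Rightarrow> real \<Rightarrow> bool" where
  "attracting f x \<longleftrightarrow> is_fixed_point f x \<and> \<bar>deriv f x\<bar> < 1"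

definition repelling :: "(real \<Rightarrow> real) \<Rightarrow> real \<Rightarrow> bool" where
  "repelling f x \<longleftrightarrow> is_fixed_point f x \<and> \<bar>deriv f x\<bar> > 1"

definition rationally_indifferent :: "(real \<Rightarrow> real) \<Rightarrow> real \<Rightarrow> bool" where
  "rationally_indifferent f x \<longleftrightarrow> is_fixed_point f x \<and> (\<exists>n::nat. n > 0 \<and> deriv f x ^ n = 1)"

definition lambda_star :: real where
  "lambda_star = (sqrt 2 + 1) * exp (sqrt 2)"

end

theory Submission
  imports Defs
begin

text \<open>A nonzero fixed point x of \<open>zeta lam\<close> satisfies \<open>lam * exp (-x) = x + 1\<close>, i.e. it is a
solution of \<open>(x + 1) * exp x = lam\<close>. The left-hand side is
negative left of -1 and strictly increasing on \<open>[-1, \<infinity>)\<close> with values 0, 1 and \<open>lambda_star\<close>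
at -1, 0 and \<open>sqrt 2\<close>; so for \<open>0 < lam < 1\<close> and \<open>1 < lam < lambda_star\<close> there is exactly one
nonzero fixed point, in \<open>(-1, 0)\<close> resp. \<open>(0, sqrt 2)\<close>. At such a fixed point the multiplier
simplifies to \<open>1/(x + 1) - x\<close>, which is \<open>> 1\<close> on \<open>(-1, 0)\<close>, lies in \<open>(-1, 1)\<close> on
\<open>(0, sqrt 2)\<close>, and equals -1 at \<open>sqrt 2\<close>. The multiplier at 0 is \<open>lam\<close> itself.\<close>

definition fixed_level :: "real \<Rightarrow> real" where
  "fixed_level x = (x + 1) * exp x"

lemma zeta_fixed_point_iff_fixed_level:
  assumes "x \<noteq> 0" "x \<noteq> -1"
  shows "zeta lam x = x \<longleftrightarrow> fixed_level x = lam"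
proof -
  have "zeta lam x = x \<longleftrightarrow> x * (lam * exp (-x)) = x * (x + 1)"
    unfolding zeta_def using assms by (auto simp: field_simps)
  also have "\<dots> \<longleftrightarrow> lam * exp (-x) = x + 1"
    using assms(1) by simp
  also have "\<dots> \<longleftrightarrow> fixed_level x = lam"
    unfolding fixed_level_def by (auto simp: exp_minus field_simps)
  finally show ?thesis .
qed

lemma fixed_level_nonpos: "x \<le> -1 \<Longrightarrow> fixed_level x \<le> 0"
  unfolding fixed_level_def by (simp add: mult_nonpos_nonneg)

lemma fixed_level_strict_mono_on: "strict_mono_on {-1..} fixed_level"
proof (rule strict_mono_onI)
  fix a b :: real
  assume "a \<in> {-1..}" "a < b"
  then show "fixed_level a < fixed_level b"
    unfolding fixed_level_def
    by (cases "a = -1") (auto intro!: mult_strict_mono)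
qed

lemma fixed_level_values:
  "fixed_level (-1) = 0" "fixed_level 0 = 1" "fixed_level (sqrt 2) = lambda_star"
  unfolding fixed_level_def lambda_star_def by (simp_all add: add.commute)

lemma zeta_nonzero_fixed_points:
  assumes "-1 \<le> a" "fixed_level a < lam" "lam < fixed_level b" "lam \<noteq> 1"
  shows "(\<exists>!x. x \<noteq> 0 \<and> x \<noteq> -1 \<and> zeta lam x = x)"
    and "\<forall>x. x \<noteq> 0 \<and> x \<noteq> -1 \<and> zeta lam x = x \<longrightarrow> x \<in> {a<..<b}"
proof -
  have mono: "fixed_level x < fixed_level y \<longleftrightarrow> x < y" if "-1 \<le> x" "-1 \<le> y" for x y
    using fixed_level_strict_mono_on that by (simp add: strict_mono_on_less)
  have "lam > 0"
    using assms fixed_level_nonpos[of a] mono[of "-1" a] fixed_level_values(1)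
    by (cases "a = -1") auto
  have "-1 < b"
    using fixed_level_nonpos[of b] assms \<open>lam > 0\<close> by force
  have in_interval: "x \<in> {a<..<b}"
    if "x \<noteq> 0" "x \<noteq> -1" "zeta lam x = x" for x
  proof -
    have level: "fixed_level x = lam"
      using that zeta_fixed_point_iff_fixed_level by blast
    then have "-1 < x"
      using fixed_level_nonpos[of x] \<open>lam > 0\<close> by force
    then have "a < x" "x < b"
      using mono[of a x] mono[of x b] assms level \<open>-1 < b\<close> by auto
    then show ?thesis
      by simp
  qed
  then show "\<forall>x. x \<noteq> 0 \<and> x \<noteq> -1 \<and> zeta lam x = x \<longrightarrow> x \<in> {a<..<b}"
    by blast
  have "a \<le> b"
    using mono[of a b] assms \<open>-1 < b\<close> by auto
  moreover have "continuous_on {a..b} fixed_level"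
    unfolding fixed_level_def by (intro continuous_intros)
  ultimately obtain x where x: "a \<le> x" "x \<le> b" "fixed_level x = lam"
    using IVT'[of fixed_level a lam b] assms by auto
  have "x \<noteq> 0" "x \<noteq> -1"
    using x assms fixed_level_values(1,2) by auto
  then have "x \<noteq> 0 \<and> x \<noteq> -1 \<and> zeta lam x = x"
    using x zeta_fixed_point_iff_fixed_level by blast
  moreover have "y = x" if "y \<noteq> 0 \<and> y \<noteq> -1 \<and> zeta lam y = y" for y
  proof -
    have "fixed_level y = fixed_level x" "-1 \<le> y"
      using that in_interval[of y] assms x zeta_fixed_point_iff_fixed_level by auto
    then show ?thesis
      using strict_mono_on_imp_inj_on[OF fixed_level_strict_mono_on] x assms
      by (auto dest: inj_onD)
  qed
  ultimately show "\<exists>!x. x \<noteq> 0 \<and> x \<noteq> -1 \<and> zeta lam x = x"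
    by blast
qed

lemma deriv_zeta:
  assumes "x \<noteq> -1"
  shows "deriv (zeta lam) x = lam * exp (-x) * (1 / (x + 1)^2 - x / (x + 1))"
proof -
  have "x + 1 \<noteq> 0"
    using assms by simp
  then have "((\<lambda>x. lam * (x / (x + 1)) * exp (- x)) has_real_derivative
      lam * exp (-x) * (1 / (x + 1)^2 - x / (x + 1))) (at x)"
    by (auto intro!: derivative_eq_intros simp: add_eq_0_iff) (simp add: divide_simps; algebra)
  then show ?thesis
    unfolding zeta_def[abs_def] by (rule DERIV_imp_deriv)
qed

lemma zeta_fixed_point_zero: "is_fixed_point (zeta lam) 0"
  unfolding is_fixed_point_def zeta_def by simp

lemma deriv_zeta_zero: "deriv (zeta lam) 0 = lam"
  using deriv_zeta[of 0 lam] by simp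

lemma deriv_zeta_at_fixed_point:
  assumes "x \<noteq> 0" "x \<noteq> -1" "zeta lam x = x"
  shows "deriv (zeta lam) x = 1 / (x + 1) - x"
proof -
  have "lam * exp (-x) = x + 1"
    using assms zeta_fixed_point_iff_fixed_level[of x lam]
    unfolding fixed_level_def by (simp add: exp_minus field_simps)
  moreover have "x + 1 \<noteq> 0"
    using assms by simp
  ultimately show ?thesis
    using deriv_zeta[OF assms(2), of lam] by (simp add: power2_eq_square right_diff_distrib)
qed

lemma repelling_zeta_negative_fixed_point:
  assumes "x \<in> {-1<..<0}" "zeta lam x = x"
  shows "repelling (zeta lam) x"
proof -
  define t where "t = x + 1"
  have t: "0 < t" "t < 1"
    using assms t_def by auto
  have "deriv (zeta lam) x = 1 / t + 1 - t"
    using deriv_zeta_at_fixed_point[of x lam] assms t_def by simp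
  moreover have "t < 1 / t"
  proof -
    have "t * t < 1 * 1"
      using t by (intro mult_strict_mono) auto
    then show ?thesis
      using t by (simp add: field_simps)
  qed
  ultimately show ?thesis
    unfolding repelling_def is_fixed_point_def using assms(2) by simp
qed

lemma attracting_zeta_positive_fixed_point:
  assumes "x \<in> {0<..<sqrt 2}" "zeta lam x = x"
  shows "attracting (zeta lam) x"
proof -
  have "0 < x" "x < sqrt 2"
    using assms by auto
  then have "x * x < sqrt 2 * sqrt 2"
    by (intro mult_strict_mono) auto
  then have "(x - 1) * (x + 1) < 1"
    by (simp add: algebra_simps)
  then have "x - 1 < 1 / (x + 1)"
    using \<open>0 < x\<close> by (simp add: field_simps)
  moreover have "1 / (x + 1) < 1"
    using \<open>0 < x\<close> by simp
  moreover have "deriv (zeta lam) x = 1 / (x + 1) - x"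
    using deriv_zeta_at_fixed_point[of x lam] assms \<open>0 < x\<close> by simp
  ultimately have "\<bar>deriv (zeta lam) x\<bar> < 1"
    using \<open>0 < x\<close> unfolding abs_less_iff by linarith
  then show ?thesis
    unfolding attracting_def is_fixed_point_def using assms(2) by simp
qed

lemma zeta_lambda_star_sqrt2:
  "zeta lambda_star (sqrt 2) = sqrt 2" "deriv (zeta lambda_star) (sqrt 2) = -1"
proof -
  have s: "sqrt 2 \<noteq> 0" "sqrt 2 \<noteq> (-1::real)"
    using real_sqrt_ge_zero[of 2] by (simp, linarith)
  then show fixed: "zeta lambda_star (sqrt 2) = sqrt 2"
    using zeta_fixed_point_iff_fixed_level fixed_level_values(3) by blast
  have "1 / (sqrt 2 + 1) = sqrt 2 - (1::real)"
    using s(2) by (simp add: field_simps add_eq_0_iff)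
  then show "deriv (zeta lambda_star) (sqrt 2) = -1"
    using deriv_zeta_at_fixed_point[OF s fixed] by simp
qed

lemma lambda_star_gt_1: "lambda_star > 1"
  unfolding lambda_star_def by (rule less_1_mult) auto

lemma zeta_zero_classification:
  "lam < 1 \<Longrightarrow> 0 < lam \<Longrightarrow> attracting (zeta lam) 0"
  "lam > 1 \<Longrightarrow> repelling (zeta lam) 0"
  "lam = 1 \<Longrightarrow> rationally_indifferent (zeta lam) 0"
  unfolding attracting_def repelling_def rationally_indifferent_def
  using zeta_fixed_point_zero deriv_zeta_zero by auto

theorem theorem3:
  fixes lam :: real
  assumes "lam > 0"
  shows "(lam < 1 \<longrightarrow>
            (\<exists>!r. r \<noteq> 0 \<and> r \<noteq> -1 \<and> zeta lam r = r)
          \<and> (\<forall>r. r \<noteq> 0 \<and> r \<noteq> -1 \<and> zeta lam r = r \<longrightarrow>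
                 r \<in> {-1<..<0} \<and> repelling (zeta lam) r)
          \<and> attracting (zeta lam) 0)
       \<and> (lam = 1 \<longrightarrow> rationally_indifferent (zeta lam) 0)
       \<and> (1 < lam \<and> lam < lambda_star \<longrightarrow>
            (\<exists>!a. a \<noteq> 0 \<and> a \<noteq> -1 \<and> zeta lam a = a)
          \<and> (\<forall>a. a \<noteq> 0 \<and> a \<noteq> -1 \<and> zeta lam a = a \<longrightarrow>
                 a \<in> {0<..<sqrt 2} \<and> attracting (zeta lam) a)
          \<and> repelling (zeta lam) 0)
       \<and> (lam = lambda_star \<longrightarrow>
            rationally_indifferent (zeta lam) (sqrt 2) \<and> repelling (zeta lam) 0)
       \<and> (lam > lambda_star \<longrightarrow> repelling (zeta lam) 0)"
proof (intro conjI impI)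
  assume "lam < 1"
  then have bounds: "fixed_level (-1) < lam" "lam < fixed_level 0" "lam \<noteq> 1"
    using assms fixed_level_values by auto
  show "\<exists>!r. r \<noteq> 0 \<and> r \<noteq> -1 \<and> zeta lam r = r"
    by (rule zeta_nonzero_fixed_points(1)[OF _ bounds]) simp
  show "\<forall>r. r \<noteq> 0 \<and> r \<noteq> -1 \<and> zeta lam r = r \<longrightarrow> r \<in> {-1<..<0} \<and> repelling (zeta lam) r"
    using zeta_nonzero_fixed_points(2)[OF _ bounds] repelling_zeta_negative_fixed_point by simp
  show "attracting (zeta lam) 0"
    using zeta_zero_classification(1) \<open>lam < 1\<close> assms .
next
  assume "1 < lam \<and> lam < lambda_star"
  then have bounds: "fixed_level 0 < lam" "lam < fixed_level (sqrt 2)" "lam \<noteq> 1"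
    using fixed_level_values by auto
  show "\<exists>!a. a \<noteq> 0 \<and> a \<noteq> -1 \<and> zeta lam a = a"
    by (rule zeta_nonzero_fixed_points(1)[OF _ bounds]) simp
  show "\<forall>a. a \<noteq> 0 \<and> a \<noteq> -1 \<and> zeta lam a = a \<longrightarrow> a \<in> {0<..<sqrt 2} \<and> attracting (zeta lam) a"
    using zeta_nonzero_fixed_points(2)[OF _ bounds] attracting_zeta_positive_fixed_point by simp
next
  assume "lam = lambda_star"
  then show "rationally_indifferent (zeta lam) (sqrt 2)"
    unfolding rationally_indifferent_def is_fixed_point_def
    using zeta_lambda_star_sqrt2 by (intro conjI exI[of _ 2]) auto
qed (use zeta_zero_classification(2,3) lambda_star_gt_1 in simp_all)

end
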